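(* For every integer $n\ge 1$ and every real $y\in[0,1]$, $$\rho(n-y)=\rho(n)+\sum_{j=1}^{n-1}\rho(n-j)\,M_{j,n}(y),$$ where $\rho$ is the Dickman function and $M_{j,n}$ are the multiple polylogarithms defined in the context.
   Context: The Dickman function $\rho:[0,\infty)\to\mathbb{R}$ is the continuous function with $\rho(u)=1$ for $u\in[0,1]$ and $u\rho'(u)=-\rho(u-1)$ for $u>1$. For integers $n>j>0$ and real $y\in[0,1]$ define $$M_{j,n}(y)=\sum_{n_1>n_2>\cdots>n_j>0}\ \prod_{i=1}^{j}\frac{z_i^{n_i}}{n_i},\qquad z_1=\frac{y}{n},\quad z_i=\frac{n+2-i}{n+1-i}\ \text{for } 1<i\le j,$$ the sum running over integers $n_1,\dots,n_j$ (it converges for these parameters). *)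

theory Defs
  imports "HOL-Analysis.Analysis"
begin

text \<open>The Dickman function. Mathematically it lives on [0,\<infinity>); as a total
function real \<Rightarrow> real we fix the (irrelevant) convention rho u = 0 for u < 0
so that it is uniquely determined.\<close>
definition dickman :: "real \<Rightarrow> real" where
  "dickman = (THE \<rho>. continuous_on {0..} \<rho>
      \<and> (\<forall>u\<in>{0..1}. \<rho> u = 1)
      \<and> (\<forall>u>1. (\<rho> has_real_derivative (- \<rho> (u - 1) / u)) (at u))
      \<and> (\<forall>u<0. \<rho> u = 0))"

text \<open>The parameters z_1, ..., z_j, indexed 0-based: zpar n y k = z_(k+1).\<close>
definition zpar :: "nat \<Rightarrow> real \<Rightarrow> nat \<Rightarrow> real" where
  "zpar n y k = (if k = 0 then y / real n
                 else (real n + 1 - real k) / (real n - real k))"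

definition Midx :: "nat \<Rightarrow> nat list set" where
  "Midx j = {ns. length ns = j \<and> sorted_wrt (>) ns \<and> (\<forall>m\<in>set ns. m > 0)}"

definition M :: "nat \<Rightarrow> nat \<Rightarrow> real \<Rightarrow> real" where
  "M j n y = (\<Sum>\<^sub>\<infinity> ns \<in> Midx j.
       (\<Prod>k<j. zpar n y k ^ (ns ! k) / real (ns ! k)))"

end

theory Submission
  imports Defs
begin

text \<open>The Dickman function is the unique solution of its delay equation; a solution is obtained
  by Picard iteration, which also makes the definite description in \<open>dickman\<close> meaningful.
  Viewing \<open>M j n y\<close> as a power series in \<open>z_1 = y/n\<close>, differentiation in \<open>y\<close> sums a geometric
  series over the outermost index \<open>n_1\<close>; since \<open>z_1 z_2 = y/(n-1)\<close> and \<open>z_3, z_4, ...\<close> are the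
  parameters \<open>z_2, z_3, ...\<close> belonging to \<open>n - 1\<close>, the \<open>y\<close>-derivative of \<open>M j n y\<close> is
  \<open>M (j-1) (n-1) y / (n - y)\<close>, where \<open>M 0 = 1\<close>. Hence the right-hand side \<open>R_n(y)\<close> satisfies
  \<open>R_n' = R_(n-1) / (n - y)\<close>, which by the delay equation is also the derivative of \<open>\<rho>(n - y)\<close>
  once \<open>R_(n-1)(y) = \<rho>(n - 1 - y)\<close> is known; as both sides agree at \<open>y = 0\<close>, induction on
  \<open>n\<close> proves the identity.\<close>

lemma continuous_on_atLeast_if_bounded:
  fixes f :: "real \<Rightarrow> real"
  assumes "\<And>b. continuous_on {a..b} f"
  shows "continuous_on {a..} f"
  unfolding continuous_on_eq_continuous_within
proof
  fix x :: real assume x: "x \<in> {a..}"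
  have "continuous (at x within {a..x+1}) f"
    using assms[of "x+1"] x unfolding continuous_on_eq_continuous_within by auto
  moreover have "at x within {a..} = at x within {a..x+1}"
    by (rule at_within_nhd[where S="{..<x+1}"]) auto
  ultimately show "continuous (at x within {a..}) f" by simp
qed

definition is_dickman :: "(real \<Rightarrow> real) \<Rightarrow> bool" where
  "is_dickman \<rho> \<longleftrightarrow> continuous_on {0..} \<rho>
      \<and> (\<forall>u\<in>{0..1}. \<rho> u = 1)
      \<and> (\<forall>u>1. (\<rho> has_real_derivative (- \<rho> (u - 1) / u)) (at u))
      \<and> (\<forall>u<0. \<rho> u = 0)"

lemma is_dickman_unique_le:
  assumes f: "is_dickman f" and g: "is_dickman g"
  shows "u \<le> real k + 1 \<Longrightarrow> f u = g u"
proof (induction k arbitrary: u)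
  case 0
  then show ?case using f g unfolding is_dickman_def by (cases "u < 0") auto
next
  case (Suc k)
  show ?case
  proof (cases "u \<le> real k + 1")
    case True then show ?thesis using Suc.IH by blast
  next
    case False
    define D where "D x = f x - g x" for x
    have "continuous_on {0..} f" "continuous_on {0..} g"
      using f g by (auto simp: is_dickman_def)
    then have cD: "continuous_on {real k + 1..real k + 2} D"
      unfolding D_def by (auto intro!: continuous_on_diff intro: continuous_on_subset)
    have dD: "(D has_real_derivative 0) (at x)" if "real k + 1 < x" "x < real k + 2" for x
    proof -
      have "(D has_real_derivative (- f (x - 1) / x) - (- g (x - 1) / x)) (at x)"
        unfolding D_def using f g that by (intro DERIV_diff) (auto simp: is_dickman_def)
      moreover have "f (x - 1) = g (x - 1)" using Suc.IH that by (cases "x - 1 \<le> real k + 1") auto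
      ultimately show ?thesis by simp
    qed
    have "D u = D (real k + 1)"
      by (rule DERIV_isconst2[OF _ cD dD]) (use Suc.prems False in auto)
    moreover have "D (real k + 1) = 0" using Suc.IH[of "real k + 1"] by (simp add: D_def)
    ultimately show ?thesis by (simp add: D_def)
  qed
qed

lemma is_dickman_unique: "is_dickman f \<Longrightarrow> is_dickman g \<Longrightarrow> f = g"
  using is_dickman_unique_le real_nat_ceiling_ge by (metis add_increasing2 ext zero_le_one)

text \<open>The Picard iterates of the integral equation
  \<open>\<rho>(u) = 1 - \<integral>\<^sub>1\<^sup>u \<rho>(t - 1) / t dt\<close>; the \<open>k\<close>-th iterate is exact on \<open>u \<le> k + 1\<close>.\<close>
fun dickman_iter :: "nat \<Rightarrow> real \<Rightarrow> real" where
  "dickman_iter 0 u = (if u < 0 then 0 else 1)"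
| "dickman_iter (Suc k) u =
     (if u < 0 then 0 else 1 - integral {1..u} (\<lambda>t. dickman_iter k (t - 1) / t))"

lemma integral_atLeastAtMost_le_1: "u \<le> 1 \<Longrightarrow> integral {1..u} (f :: real \<Rightarrow> real) = 0"
  by (cases "u < 1") auto

lemma dickman_iter_kernel_continuous:
  assumes "\<And>b. continuous_on {0..b} (dickman_iter k)"
  shows "continuous_on {1..c} (\<lambda>t. dickman_iter k (t - 1) / t)"
proof (rule continuous_on_divide)
  show "continuous_on {1..c} (\<lambda>t. dickman_iter k (t - 1))"
    by (rule continuous_on_compose2[OF assms[of "c - 1"]]) (auto intro!: continuous_intros)
qed (auto intro!: continuous_intros)

lemma dickman_iter_continuous: "continuous_on {0..b} (dickman_iter k)"
proof (induction k arbitrary: b)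
  case 0
  show ?case by (rule continuous_on_eq[OF continuous_on_const[of _ 1]]) auto
next
  case (Suc k)
  have one: "continuous_on {0..1} (dickman_iter (Suc k))"
    by (rule continuous_on_eq[OF continuous_on_const[of _ 1]])
       (auto simp: integral_atLeastAtMost_le_1)
  have "continuous_on {1..c} (\<lambda>t. 1 - integral {1..t} (\<lambda>t. dickman_iter k (t - 1) / t))" for c
    using dickman_iter_kernel_continuous[OF Suc.IH]
    by (intro continuous_on_diff continuous_on_const indefinite_integral_continuous_1
        integrable_continuous_real)
  then have rest: "continuous_on {1..c} (dickman_iter (Suc k))" for c
    by (rule continuous_on_eq) auto
  show ?case
  proof (cases "b \<le> 1")
    case True
    then show ?thesis by (intro continuous_on_subset[OF one]) auto
  next
    case False
    with continuous_on_closed_Un[OF _ _ one rest, of b] show ?thesis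
      by (simp add: ivl_disj_un_two_touch)
  qed
qed

lemma dickman_iter_Suc_eq: "u \<le> real k + 1 \<Longrightarrow> dickman_iter (Suc k) u = dickman_iter k u"
proof (induction k arbitrary: u)
  case 0
  then show ?case by (simp add: integral_atLeastAtMost_le_1)
next
  case (Suc k)
  have "integral {1..u} (\<lambda>t. dickman_iter (Suc k) (t - 1) / t)
      = integral {1..u} (\<lambda>t. dickman_iter k (t - 1) / t)"
  proof (rule integral_cong)
    fix t assume "t \<in> {1..u}"
    then have "t - 1 \<le> real k + 1" using Suc.prems by auto
    then show "dickman_iter (Suc k) (t - 1) / t = dickman_iter k (t - 1) / t"
      by (simp only: Suc.IH)
  qed
  then show ?case by (simp only: dickman_iter.simps)
qed

lemma dickman_iter_stable:
  "k \<le> m \<Longrightarrow> u \<le> real k + 1 \<Longrightarrow> dickman_iter m u = dickman_iter k u"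
proof (induction m rule: dec_induct)
  case (step m)
  then show ?case using dickman_iter_Suc_eq[of u m] by simp
qed simp

definition dickman_sol :: "real \<Rightarrow> real" where
  "dickman_sol u = dickman_iter (nat \<lceil>u\<rceil>) u"

lemma dickman_sol_eq_iter: "u \<le> real k + 1 \<Longrightarrow> dickman_sol u = dickman_iter k u"
  unfolding dickman_sol_def
  by (metis dickman_iter_stable nat_le_linear add_increasing2 real_nat_ceiling_ge zero_le_one)

lemma is_dickman_dickman_sol: "is_dickman dickman_sol"
  unfolding is_dickman_def
proof (intro conjI ballI allI impI)
  show "continuous_on {0..} dickman_sol"
  proof (rule continuous_on_atLeast_if_bounded)
    fix b :: real
    show "continuous_on {0..b} dickman_sol"
    proof (rule continuous_on_eq[OF dickman_iter_continuous[of b "nat \<lceil>b\<rceil>"]])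
      fix u assume "u \<in> {0..b}"
      then have "u \<le> b" by simp
      with real_nat_ceiling_ge[of b] have "u \<le> real (nat \<lceil>b\<rceil>) + 1" by linarith
      then show "dickman_iter (nat \<lceil>b\<rceil>) u = dickman_sol u" by (simp add: dickman_sol_eq_iter)
    qed
  qed
next
  fix u :: real
  show "u \<in> {0..1} \<Longrightarrow> dickman_sol u = 1" and "u < 0 \<Longrightarrow> dickman_sol u = 0"
    using dickman_sol_eq_iter[of u 0] by auto
next
  fix u :: real assume u: "1 < u"
  define k where "k = nat \<lceil>u\<rceil>"
  have uk: "u \<le> real k" unfolding k_def by (rule real_nat_ceiling_ge)
  define h where "h = (\<lambda>t. dickman_iter k (t - 1) / t)"
  have "((\<lambda>x. integral {1..x} h) has_real_derivative h u) (at u within {1..u+1})"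
    unfolding h_def using u
    by (intro integral_has_real_derivative dickman_iter_kernel_continuous dickman_iter_continuous) auto
  moreover have "at u within {1..u+1} = at u"
    by (rule at_within_interior) (use u in auto)
  ultimately have "((\<lambda>x. 1 - integral {1..x} h) has_real_derivative - h u) (at u)"
    by (auto intro!: derivative_eq_intros)
  then have "(dickman_sol has_real_derivative - h u) (at u)"
    by (rule has_field_derivative_transform_within_open[where S="{0<..<real k + 2}"])
       (use u uk in \<open>auto simp: dickman_sol_eq_iter[of _ "Suc k"] h_def\<close>)
  moreover have "h u = dickman_sol (u - 1) / u"
    using uk dickman_sol_eq_iter[of "u - 1" k] by (simp add: h_def)
  ultimately show "(dickman_sol has_real_derivative - dickman_sol (u - 1) / u) (at u)" by simp
qed

lemma is_dickman_dickman: "is_dickman dickman"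
proof -
  have "dickman = dickman_sol"
    unfolding dickman_def
    by (rule the_equality)
       (use is_dickman_dickman_sol is_dickman_unique in \<open>auto simp: is_dickman_def\<close>)
  then show ?thesis using is_dickman_dickman_sol by simp
qed

lemma dickman_eq_1: "0 \<le> u \<Longrightarrow> u \<le> 1 \<Longrightarrow> dickman u = 1"
  and dickman_continuous: "continuous_on {0..} dickman"
  and dickman_has_derivative: "1 < u \<Longrightarrow> (dickman has_real_derivative - dickman (u - 1) / u) (at u)"
  using is_dickman_dickman by (auto simp: is_dickman_def)

definition Midx_below :: "nat \<Rightarrow> nat \<Rightarrow> nat list set" where
  "Midx_below j m = {ns \<in> Midx j. \<forall>a\<in>set ns. a < m}"

definition polylog_term :: "real list \<Rightarrow> nat list \<Rightarrow> real" where
  "polylog_term zs ns = (\<Prod>k<length zs. zs ! k ^ (ns ! k) / real (ns ! k))"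

definition polylog_coeff :: "real list \<Rightarrow> nat \<Rightarrow> real" where
  "polylog_coeff zs m = (\<Sum>ns\<in>Midx_below (length zs) m. polylog_term zs ns)"

text \<open>\<open>polylog_series zs x\<close> is the multiple polylogarithm with parameters \<open>x # zs\<close>,
  written as a power series in its first parameter \<open>x\<close> (cf. \<open>polylog_series_has_sum\<close>).\<close>
definition polylog_series :: "real list \<Rightarrow> real \<Rightarrow> real" where
  "polylog_series zs x = (\<Sum>m. polylog_coeff zs m / real m * x ^ m)"

lemma finite_Midx_below: "finite (Midx_below j m)"
proof (rule finite_subset)
  show "Midx_below j m \<subseteq> {xs. set xs \<subseteq> {..<m} \<and> length xs = j}"
    unfolding Midx_below_def Midx_def by auto
qed (rule finite_lists_length_eq, simp)

lemma Cons_in_Midx_iff: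
  "a # t \<in> Midx (Suc j) \<longleftrightarrow> 0 < a \<and> t \<in> Midx j \<and> (\<forall>b\<in>set t. b < a)"
  unfolding Midx_def by auto

lemma Midx_Suc:
  "Midx (Suc j) = (\<lambda>(a, t). a # t) ` (SIGMA a:UNIV. {t. 0 < a \<and> t \<in> Midx_below j a})"
  unfolding Midx_below_def
  by (auto simp: Cons_in_Midx_iff image_iff Midx_def length_Suc_conv)

lemma Midx_below_Suc:
  "Midx_below (Suc j) m
     = (\<lambda>(a, t). a # t) ` (SIGMA a:{..<m}. {t. 0 < a \<and> t \<in> Midx_below j a})"
  unfolding Midx_below_def
  by (auto simp: Cons_in_Midx_iff image_iff Midx_def length_Suc_conv dest: order.strict_trans)

lemma polylog_term_Cons: "polylog_term (z # zs) (a # t) = z ^ a / real a * polylog_term zs t"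
  unfolding polylog_term_def by (simp only: length_Cons prod.lessThan_Suc_shift nth_Cons_0 nth_Cons_Suc)

lemma sum_polylog_term_Cons:
  "(\<Sum>t | 0 < a \<and> t \<in> Midx_below (length zs) a. polylog_term (z # zs) (a # t))
     = z ^ a / real a * polylog_coeff zs a"
  by (cases "a = 0") (simp_all add: polylog_coeff_def polylog_term_Cons sum_distrib_left)

lemma polylog_coeff_Nil: "polylog_coeff [] m = 1"
proof -
  have "Midx_below 0 m = {[]}" by (auto simp: Midx_below_def Midx_def)
  then show ?thesis by (simp add: polylog_coeff_def polylog_term_def)
qed

lemma polylog_coeff_Cons: "polylog_coeff (z # zs) m = (\<Sum>a<m. z ^ a / real a * polylog_coeff zs a)"
proof -
  let ?S = "SIGMA a:{..<m}. {t. 0 < a \<and> t \<in> Midx_below (length zs) a}"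
  have "polylog_coeff (z # zs) m = (\<Sum>(a, t)\<in>?S. polylog_term (z # zs) (a # t))"
    unfolding polylog_coeff_def length_Cons Midx_below_Suc
    by (subst sum.reindex) (auto simp: inj_on_def case_prod_unfold)
  also have "\<dots> = (\<Sum>a<m. \<Sum>t | 0 < a \<and> t \<in> Midx_below (length zs) a. polylog_term (z # zs) (a # t))"
    by (subst sum.Sigma) (auto intro: finite_subset[OF _ finite_Midx_below])
  finally show ?thesis by (simp only: sum_polylog_term_Cons)
qed

lemma polylog_term_nonneg: "\<forall>z\<in>set zs. 0 \<le> z \<Longrightarrow> 0 \<le> polylog_term zs ns"
  unfolding polylog_term_def by (intro prod_nonneg divide_nonneg_nonneg zero_le_power) auto

lemma polylog_coeff_nonneg: "\<forall>z\<in>set zs. 0 \<le> z \<Longrightarrow> 0 \<le> polylog_coeff zs m"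
  unfolding polylog_coeff_def by (intro sum_nonneg polylog_term_nonneg)

lemma prod_list_ge_1: "\<forall>z\<in>set zs. 1 \<le> (z::real) \<Longrightarrow> 1 \<le> prod_list zs"
  by (induction zs) (auto intro: order_trans[OF _ mult_mono[of 1 _ 1, simplified]])

lemma divide_of_nat_le: "0 \<le> (w::real) \<Longrightarrow> w / real a \<le> w"
  by (cases a) (auto simp: divide_le_eq mult_le_cancel_left1)

lemma polylog_coeff_bound:
  assumes "\<forall>z\<in>set zs. 1 < z"
  shows "\<exists>C\<ge>0. \<forall>m. polylog_coeff zs m \<le> C * prod_list zs ^ m"
  using assms
proof (induction zs)
  case Nil
  then show ?case by (intro exI[of _ 1]) (simp add: polylog_coeff_Nil)
next
  case (Cons z zs)
  then obtain C where C: "C \<ge> 0" "\<And>m. polylog_coeff zs m \<le> C * prod_list zs ^ m" by auto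
  define q where "q = prod_list (z # zs)"
  have "1 \<le> prod_list zs" using Cons.prems by (intro prod_list_ge_1) auto
  moreover have z: "1 < z" using Cons.prems by auto
  ultimately have q: "1 < q"
    unfolding q_def by (simp add: less_le_trans[OF _ mult_left_mono[of 1 "prod_list zs" z]])
  show ?case
  proof (intro exI[of _ "C / (q - 1)"] conjI allI)
    show "0 \<le> C / (q - 1)" using C q by simp
    fix m
    have "polylog_coeff (z # zs) m \<le> (\<Sum>a<m. z ^ a * (C * prod_list zs ^ a))"
      unfolding polylog_coeff_Cons using Cons.prems C z
      by (intro sum_mono mult_mono divide_of_nat_le polylog_coeff_nonneg) auto
    also have "\<dots> = C * (\<Sum>a<m. q ^ a)"
      by (simp add: q_def sum_distrib_left power_mult_distrib mult_ac)
    also have "\<dots> = C * ((1 - q ^ m) / (1 - q))"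
      using q by (simp add: sum_gp_strict)
    also have "\<dots> \<le> C / (q - 1) * q ^ m"
      using C q by (simp add: field_simps mult_le_cancel_left1)
    finally show "polylog_coeff (z # zs) m \<le> C / (q - 1) * prod_list (z # zs) ^ m"
      by (simp only: q_def)
  qed
qed

lemma polylog_series_summable_norm:
  assumes zs: "\<forall>z\<in>set zs. 1 < z" and x: "\<bar>x\<bar> * prod_list zs < 1"
  shows "summable (\<lambda>m. norm (polylog_coeff zs m / real m * x ^ m))"
proof -
  obtain C where C: "C \<ge> 0" "\<And>m. polylog_coeff zs m \<le> C * prod_list zs ^ m"
    using polylog_coeff_bound[OF zs] by auto
  have nonneg: "0 \<le> polylog_coeff zs m" for m using zs by (intro polylog_coeff_nonneg) auto
  have bound: "norm (polylog_coeff zs m / real m * x ^ m) \<le> C * (\<bar>x\<bar> * prod_list zs) ^ m" for m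
  proof -
    have "norm (polylog_coeff zs m / real m * x ^ m) = polylog_coeff zs m / real m * \<bar>x\<bar> ^ m"
      using nonneg[of m] by (simp add: abs_mult power_abs)
    also have "\<dots> \<le> polylog_coeff zs m * \<bar>x\<bar> ^ m"
      using nonneg[of m] by (intro mult_right_mono divide_of_nat_le) auto
    also have "\<dots> \<le> C * prod_list zs ^ m * \<bar>x\<bar> ^ m"
      using C by (intro mult_right_mono) auto
    finally show ?thesis by (simp add: power_mult_distrib mult_ac)
  qed
  have "0 \<le> prod_list zs" using zs by (intro order_trans[OF zero_le_one prod_list_ge_1]) auto
  then have "summable (\<lambda>m. C * (\<bar>x\<bar> * prod_list zs) ^ m)"
    using x by (intro summable_mult summable_geometric) simp
  then show ?thesis by (rule summable_comparison_test') (metis bound abs_norm_cancel real_norm_def)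
qed

lemma polylog_series_has_derivative:
  assumes zs: "\<forall>z\<in>set zs. 1 < z" and x: "\<bar>x\<bar> * prod_list zs < 1"
  shows "(polylog_series zs has_real_derivative (\<Sum>m. polylog_coeff zs (Suc m) * x ^ m)) (at x)"
proof -
  have P: "1 \<le> prod_list zs" using zs by (intro prod_list_ge_1) auto
  have "((\<lambda>x. \<Sum>m. polylog_coeff zs m / real m * x ^ m) has_real_derivative
          (\<Sum>m. diffs (\<lambda>m. polylog_coeff zs m / real m) m * x ^ m)) (at x)"
  proof (rule termdiffs_strong'[where K = "1 / prod_list zs"])
    fix w :: real assume "norm w < 1 / prod_list zs"
    then have "\<bar>w\<bar> * prod_list zs < 1" using P by (simp add: field_simps)
    then show "summable (\<lambda>m. polylog_coeff zs m / real m * w ^ m)"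
      by (rule summable_norm_cancel[OF polylog_series_summable_norm[OF zs]])
  qed (use x P in \<open>simp add: field_simps\<close>)
  then show ?thesis unfolding polylog_series_def[abs_def] by (simp add: diffs_def)
qed

lemma polylog_series_Nil_has_derivative:
  assumes "0 \<le> x" "x < 1"
  shows "(polylog_series [] has_real_derivative 1 / (1 - x)) (at x)"
  using polylog_series_has_derivative[of "[]" x] assms suminf_geometric[of x]
  by (simp add: polylog_coeff_Nil)

text \<open>Summing the derivatives \<open>x^(a-1)\<close> of the leading factor over \<open>a > n_2\<close> gives
  \<open>x^n_2 / (1 - x)\<close>; as power series this is a Cauchy product with the geometric series.\<close>
lemma polylog_series_Cons_has_derivative:
  assumes zs: "\<forall>w\<in>set (z # zs). 1 < w" and x: "0 \<le> x" "x * prod_list (z # zs) < 1"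
  shows "(polylog_series (z # zs) has_real_derivative polylog_series zs (x * z) / (1 - x)) (at x)"
proof -
  have "1 \<le> prod_list (z # zs)" using zs by (intro prod_list_ge_1) auto
  then have x1: "x < 1" using mult_left_mono[OF _ x(1)] x(2) by fastforce
  define A where "A i = polylog_coeff zs i / real i * (x * z) ^ i" for i
  define B where "B k = x ^ k" for k
  have "summable (\<lambda>i. norm (A i))"
    unfolding A_def using zs x by (intro polylog_series_summable_norm) (auto simp: abs_mult mult_ac)
  moreover have "summable (\<lambda>k. norm (B k))" unfolding B_def using x x1 by simp
  ultimately have "(\<lambda>k. \<Sum>i\<le>k. A i * B (k - i)) sums ((\<Sum>k. A k) * (\<Sum>k. B k))"
    by (rule Cauchy_product_sums)
  moreover have "(\<Sum>i\<le>k. A i * B (k - i)) = polylog_coeff (z # zs) (Suc k) * x ^ k" for k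
  proof -
    have "(\<Sum>i\<le>k. A i * B (k - i)) = (\<Sum>i\<le>k. z ^ i / real i * polylog_coeff zs i * x ^ k)"
      by (intro sum.cong refl)
         (simp add: A_def B_def power_mult_distrib power_add[symmetric])
    then show ?thesis by (simp add: polylog_coeff_Cons lessThan_Suc_atMost sum_distrib_right)
  qed
  moreover have "(\<Sum>k. B k) = 1 / (1 - x)" unfolding B_def using suminf_geometric[of x] x x1 by simp
  ultimately have "(\<lambda>k. polylog_coeff (z # zs) (Suc k) * x ^ k)
                     sums (polylog_series zs (x * z) / (1 - x))"
    by (simp add: polylog_series_def A_def)
  with polylog_series_has_derivative[of "z # zs" x] zs x show ?thesis
    by (simp add: sums_iff)
qed

lemma polylog_series_zero: "polylog_series zs 0 = 0"
  unfolding polylog_series_def by (simp only: powser_zero) simp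

lemma polylog_series_has_sum:
  assumes zs: "\<forall>z\<in>set zs. 1 < z" and x: "0 \<le> x" "x * prod_list zs < 1"
  shows "(polylog_term (x # zs) has_sum polylog_series zs x) (Midx (Suc (length zs)))"
proof -
  define S where "S = (SIGMA a:UNIV. {t. 0 < a \<and> t \<in> Midx_below (length zs) a})"
  define f where "f = (\<lambda>p. polylog_term (x # zs) (fst p # snd p))"
  define g where "g a = polylog_coeff zs a / real a * x ^ a" for a
  have fiber: "((\<lambda>t. f (a, t)) has_sum g a) {t. 0 < a \<and> t \<in> Midx_below (length zs) a}" for a
    unfolding f_def g_def fst_conv snd_conv
    by (rule has_sum_finiteI[OF finite_subset[OF _ finite_Midx_below[of "length zs" a]]])
       (auto simp: sum_polylog_term_Cons mult_ac)
  have "\<bar>x\<bar> * prod_list zs < 1" using x by simp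
  then have "g sums polylog_series zs x"
    unfolding g_def polylog_series_def
    by (rule summable_sums[OF summable_norm_cancel[OF polylog_series_summable_norm[OF zs]]])
  moreover have "0 \<le> g m" for m
    unfolding g_def using zs x
    by (intro mult_nonneg_nonneg divide_nonneg_nonneg polylog_coeff_nonneg) auto
  ultimately have g: "(g has_sum polylog_series zs x) UNIV"
    by (rule sums_nonneg_imp_has_sum)
  have "0 \<le> f p" for p
    unfolding f_def using zs x by (intro polylog_term_nonneg) auto
  then have "f summable_on S"
    unfolding S_def using g by (intro summable_on_SigmaI[OF fiber]) (auto dest: has_sum_imp_summable)
  then have "(f has_sum polylog_series zs x) S"
    unfolding S_def by (rule has_sum_SigmaI[OF fiber g])
  then show ?thesis
    unfolding Midx_Suc S_def
    by (subst has_sum_reindex) (simp_all add: inj_on_def o_def f_def case_prod_unfold)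
qed

definition zpar_tail :: "nat \<Rightarrow> nat \<Rightarrow> real list" where
  "zpar_tail n j = map (\<lambda>k. (real n + 1 - real k) / (real n - real k)) [1..<j]"

lemma zpar_tail_gt_1: "j \<le> n \<Longrightarrow> \<forall>z\<in>set (zpar_tail n j). 1 < z"
  unfolding zpar_tail_def by (auto simp: field_simps)

lemma prod_list_zpar_tail:
  "1 \<le> j \<Longrightarrow> j \<le> n \<Longrightarrow> prod_list (zpar_tail n j) = real n / (real n + 1 - real j)"
proof (induction j rule: nat_induct_at_least)
  case base
  then show ?case by (simp add: zpar_tail_def)
next
  case (Suc j)
  have "zpar_tail n (Suc j) = zpar_tail n j @ [(real n + 1 - real j) / (real n - real j)]"
    using Suc.hyps by (simp add: zpar_tail_def)
  then have "prod_list (zpar_tail n (Suc j))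
      = real n / (real n + 1 - real j) * ((real n + 1 - real j) / (real n - real j))"
    using Suc by simp
  also have "\<dots> = real n / (real n + 1 - real (Suc j))"
  proof -
    have "real n + 1 - real j \<noteq> 0" "real n - real j \<noteq> 0" using Suc.prems by auto
    then show ?thesis by simp
  qed
  finally show ?case .
qed

lemma zpar_tail_Suc:
  "1 \<le> j \<Longrightarrow> 2 \<le> n \<Longrightarrow> zpar_tail n (Suc j) = real n / (real n - 1) # zpar_tail (n - 1) j"
  unfolding zpar_tail_def
  by (simp add: upt_conv_Cons map_Suc_upt[symmetric] of_nat_diff algebra_simps del: upt_Suc)

lemma zpar_tail_radius:
  assumes "1 \<le> j" "j < n" "0 \<le> y" "y \<le> 1"
  shows "y / real n * prod_list (zpar_tail n j) < 1"
  using assms by (simp add: prod_list_zpar_tail field_simps)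

definition M_series :: "nat \<Rightarrow> nat \<Rightarrow> real \<Rightarrow> real" where
  "M_series j n y = (if j = 0 then 1 else polylog_series (zpar_tail n j) (y / real n))"

lemma M_eq_M_series:
  assumes "j < n" "0 \<le> y" "y \<le> 1"
  shows "M j n y = M_series j n y"
proof (cases "j = 0")
  case True
  have "Midx 0 = {[]}" by (auto simp: Midx_def)
  then show ?thesis using True by (simp add: M_def M_series_def)
next
  case False
  then have "[0..<j] = 0 # [1..<j]" by (simp add: upt_conv_Cons)
  then have zs: "map (zpar n y) [0..<j] = y / real n # zpar_tail n j"
    by (auto simp: zpar_def zpar_tail_def)
  have "M j n y = infsum (polylog_term (map (zpar n y) [0..<j])) (Midx j)"
    unfolding M_def polylog_term_def by (intro infsum_cong prod.cong) auto
  also have "\<dots> = polylog_series (zpar_tail n j) (y / real n)"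
  proof (rule infsumI)
    have "Midx j = Midx (Suc (length (zpar_tail n j)))" using False by (simp add: zpar_tail_def)
    then show "(polylog_term (map (zpar n y) [0..<j]) has_sum
                 polylog_series (zpar_tail n j) (y / real n)) (Midx j)"
      unfolding zs using False assms
      by (auto intro!: polylog_series_has_sum zpar_tail_gt_1 zpar_tail_radius)
  qed
  finally show ?thesis using False by (simp add: M_series_def)
qed

lemma M_series_has_derivative:
  assumes j: "1 \<le> j" "j < n" and y: "0 \<le> y" "y \<le> 1"
  shows "(M_series j n has_real_derivative M_series (j - 1) (n - 1) y / (real n - y)) (at y)"
proof -
  have n: "2 \<le> n" using j by simp
  have "M_series j n = (\<lambda>y. polylog_series (zpar_tail n j) (y / real n))"
    using j by (auto simp: M_series_def)
  moreover have "((\<lambda>y. polylog_series (zpar_tail n j) (y / real n)) has_real_derivative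
                    M_series (j - 1) (n - 1) y / (1 - y / real n) * (1 / real n)) (at y)"
  proof (rule DERIV_chain2[of "polylog_series (zpar_tail n j)"])
    show "((\<lambda>y. y / real n) has_real_derivative 1 / real n) (at y)"
      by (rule DERIV_cdivide[OF DERIV_ident])
    show "(polylog_series (zpar_tail n j) has_real_derivative
             M_series (j - 1) (n - 1) y / (1 - y / real n)) (at (y / real n))"
    proof (cases "j = 1")
      case True
      then show ?thesis
        using polylog_series_Nil_has_derivative[of "y / real n"] n y
        by (simp add: M_series_def zpar_tail_def)
    next
      case False
      then obtain i where i: "j = Suc i" "1 \<le> i" using j by (cases j) auto
      have zs: "zpar_tail n j = real n / (real n - 1) # zpar_tail (n - 1) i"
        using zpar_tail_Suc[OF i(2) n] i(1) by simp
      have "(polylog_series (zpar_tail n j) has_real_derivative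
              polylog_series (zpar_tail (n - 1) i) (y / real n * (real n / (real n - 1)))
                / (1 - y / real n)) (at (y / real n))"
        using zpar_tail_gt_1[of j n] zpar_tail_radius[OF j y] j y unfolding zs
        by (intro polylog_series_Cons_has_derivative) auto
      moreover have "y / real n * (real n / (real n - 1)) = y / real (n - 1)"
        using n by (simp add: of_nat_diff)
      ultimately show ?thesis using i by (simp add: M_series_def)
    qed
  qed
  moreover have "M_series (j - 1) (n - 1) y / (1 - y / real n) * (1 / real n)
                   = M_series (j - 1) (n - 1) y / (real n - y)"
    using n y by (simp add: field_simps)
  ultimately show ?thesis by (simp only:)
qed

definition dickman_rhs :: "nat \<Rightarrow> real \<Rightarrow> real" where
  "dickman_rhs n y = (\<Sum>j<n. dickman (real n - real j) * M_series j n y)"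

lemma dickman_rhs_has_derivative:
  assumes "0 \<le> y" "y \<le> 1"
  shows "(dickman_rhs n has_real_derivative dickman_rhs (n - 1) y / (real n - y)) (at y)"
proof (cases n)
  case 0
  then show ?thesis by (simp add: dickman_rhs_def[abs_def])
next
  case (Suc m)
  define c where "c i = dickman (real n - real (Suc i))" for i
  have "dickman_rhs n = (\<lambda>y. dickman (real n) + (\<Sum>i<m. c i * M_series (Suc i) n y))"
    by (simp add: dickman_rhs_def[abs_def] c_def Suc sum.lessThan_Suc_shift M_series_def
             del: sum.lessThan_Suc)
  moreover have "((\<lambda>y. \<Sum>i<m. c i * M_series (Suc i) n y)
      has_real_derivative (\<Sum>i<m. c i * (M_series i m y / (real n - y)))) (at y)"
  proof (rule DERIV_sum, rule DERIV_cmult)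
    fix i assume "i \<in> {..<m}"
    then show "(M_series (Suc i) n has_real_derivative M_series i m y / (real n - y)) (at y)"
      using M_series_has_derivative[of "Suc i" n y] assms Suc by simp
  qed
  then have "((\<lambda>y. dickman (real n) + (\<Sum>i<m. c i * M_series (Suc i) n y))
      has_real_derivative (\<Sum>i<m. c i * (M_series i m y / (real n - y)))) (at y)"
    using DERIV_add[OF DERIV_const] by fastforce
  moreover have "(\<Sum>i<m. c i * (M_series i m y / (real n - y)))
      = dickman_rhs (n - 1) y / (real n - y)"
    by (simp add: dickman_rhs_def c_def Suc sum_divide_distrib)
  ultimately show ?thesis by (simp only:)
qed

lemma dickman_rhs_zero: "1 \<le> n \<Longrightarrow> dickman_rhs n 0 = dickman (real n)"
  by (cases n) (simp_all add: dickman_rhs_def sum.lessThan_Suc_shift M_series_def polylog_series_zero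
                      del: sum.lessThan_Suc)

lemma dickman_eq_dickman_rhs:
  "1 \<le> n \<Longrightarrow> 0 \<le> y \<Longrightarrow> y \<le> 1 \<Longrightarrow> dickman (real n - y) = dickman_rhs n y"
proof (induction n arbitrary: y rule: nat_induct_at_least)
  case base
  then show ?case by (simp add: dickman_rhs_def M_series_def dickman_eq_1)
next
  case (Suc n)
  define H where "H y = dickman (real (Suc n) - y) - dickman_rhs (Suc n) y" for y
  have "continuous_on {0..1} (\<lambda>y. dickman (real (Suc n) - y))"
    by (rule continuous_on_compose2[OF dickman_continuous]) (auto intro!: continuous_intros)
  moreover have "continuous_on {0..1} (dickman_rhs (Suc n))"
    by (intro continuous_at_imp_continuous_on ballI DERIV_isCont[OF dickman_rhs_has_derivative]) auto
  ultimately have "continuous_on {0..1} H"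
    unfolding H_def by (intro continuous_on_diff)
  moreover have "(H has_real_derivative 0) (at x)" if x: "0 < x" "x < 1" for x
  proof -
    have "((\<lambda>y. dickman (real (Suc n) - y)) has_real_derivative
            dickman (real n - x) / (real (Suc n) - x)) (at x)"
    proof -
      have "(dickman has_real_derivative - dickman (real (Suc n) - x - 1) / (real (Suc n) - x))
              (at (real (Suc n) - x))"
        using x Suc.hyps by (intro dickman_has_derivative) simp
      from DERIV_chain2[OF this DERIV_diff[OF DERIV_const DERIV_ident]] show ?thesis
        by (simp add: algebra_simps)
    qed
    moreover have "dickman (real n - x) = dickman_rhs n x" using Suc x by simp
    ultimately show ?thesis
      unfolding H_def[abs_def] using dickman_rhs_has_derivative[of x "Suc n"] x
      by (auto intro!: derivative_eq_intros)
  qed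
  ultimately have "H y = H 0"
    by (intro DERIV_isconst2[of 0 1]) (use Suc.prems in auto)
  then show ?case by (simp add: H_def dickman_rhs_zero)
qed

theorem theorem1:
  fixes n :: nat and y :: real
  assumes "n \<ge> 1" and "0 \<le> y" and "y \<le> 1"
  shows "dickman (real n - y) =
           dickman (real n) + (\<Sum>j = 1..n - 1. dickman (real n - real j) * M j n y)"
proof -
  have "{..<n} = insert 0 {1..n - 1}" using assms(1) by auto
  then have "dickman_rhs n y = dickman (real n) + (\<Sum>j = 1..n - 1. dickman (real n - real j) * M_series j n y)"
    by (simp add: dickman_rhs_def M_series_def)
  also have "(\<Sum>j = 1..n - 1. dickman (real n - real j) * M_series j n y)
           = (\<Sum>j = 1..n - 1. dickman (real n - real j) * M j n y)"
  proof (intro sum.cong refl)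
    fix j assume "j \<in> {1..n - 1}"
    then have "j < n" by auto
    then show "dickman (real n - real j) * M_series j n y = dickman (real n - real j) * M j n y"
      using assms by (simp add: M_eq_M_series)
  qed
  finally show ?thesis using dickman_eq_dickman_rhs assms by simp
qed

end
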